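(* Let data $\mathbf X\in\mathcal X$ have distribution $P_\theta$, $\theta\in\Theta$, with $m$ tasks, decision spaces $\mathcal D_i$ and losses $\ell_i:\mathcal D_i\times\Theta\to[0,1]$. Let $\mathbf s^1:\mathcal X\to\{0,1\}^m$ be any selection rule and $d_i:\mathcal X\times[0,1]\to\mathcal D_i$ decision rules such that (i) $d_i$ controls the $\ell_i$-risk: $\mathbb E_\theta[\ell_i(d_i(\mathbf X;q'),\theta)]\le q'$ for all $q'\in[0,1]$ and $\theta\in\Theta$; (ii) $\ell_i(d_i(\mathbf x;q'),\theta)$ is non-decreasing in $q'$. Let $f(m)=m\sum_{j=1}^m(1/j)$, $\mathbf S^1=\mathbf s^1(\mathbf X)$ with selected set $\mathcal S^1=\{i:S^1_i=1\}$, and $D_i^1=d_i(\mathbf X;q|\mathcal S^1|/f(m))$. Then for all $\theta\in\Theta$ and $q\in[0,1]$, $$\mathbb E_\theta\left[\frac{\sum_{i\in\mathcal S^1}\ell_i(D_i^1,\theta)}{1\vee|\mathcal S^1|}\right]\le q.$$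
   Context: No independence between tasks is assumed; $\mathbb E_\theta$ denotes expectation under $P_\theta$. *)

theory Defs
  imports "HOL-Probability.Probability"
begin

definition fm :: "nat \<Rightarrow> real" where
  "fm m = real m * (\<Sum>j=1..m. 1 / real j)"

definition selected :: "nat \<Rightarrow> ('x \<Rightarrow> nat \<Rightarrow> bool) \<Rightarrow> 'x \<Rightarrow> nat set" where
  "selected m s1 x = {i \<in> {1..m}. s1 x i}"

end

theory Submission
  imports Defs
begin

text \<open>
  Write \<open>H = \<Sum>j=1..m. 1/j\<close>, so that \<open>fm m = m H\<close>, and let \<open>g\<^sub>i(j)\<close> be the loss of task \<open>i\<close>
  at level \<open>q j / fm m\<close>. The weights \<open>c\<^sub>j = 1/(j(j+1))\<close> for \<open>j < m\<close> and \<open>c\<^sub>m = 1/m\<close> satisfy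
  \<open>\<Sum>j=k..m. c\<^sub>j = 1/k\<close>, so monotonicity of \<open>g\<^sub>i\<close> gives \<open>g\<^sub>i(k)/k \<le> \<Sum>j. c\<^sub>j g\<^sub>i(j)\<close> for every
  possible number \<open>k\<close> of selected tasks. This replaces the random, data-dependent level by
  the fixed levels \<open>q j / fm m\<close>, at which risk control applies, and the expectation of the
  bound is at most \<open>\<Sum>i. \<Sum>j. c\<^sub>j q j / fm m = m q H / fm m = q\<close> since \<open>\<Sum>j. c\<^sub>j j = H\<close>.
  No assumption on the selection rule is needed.
\<close>

text \<open>The Benjamini--Yekutieli weights: divided by \<open>\<Sum>k=1..m. 1/k\<close> they are the reshaping
  distribution on \<open>{1..m}\<close> that produces the correction factor \<open>fm m\<close>.\<close>

definition by_weight :: "nat \<Rightarrow> nat \<Rightarrow> real" where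
  "by_weight m j = (if j < m then 1 / (real j * real (j + 1)) else 1 / real m)"

lemma by_weight_nonneg: "0 \<le> by_weight m j"
  unfolding by_weight_def by simp

lemma sum_by_weight_from:
  assumes "1 \<le> k" "k \<le> m"
  shows "(\<Sum>j=k..m. by_weight m j) = 1 / real k"
  using assms(2,1)
proof (induction k rule: inc_induct)
  case base
  then show ?case by (simp add: by_weight_def)
next
  case (step k)
  have "{k..m} = insert k {Suc k..m}" using step.hyps by auto
  then have "(\<Sum>j=k..m. by_weight m j) = by_weight m k + 1 / real (Suc k)"
    using step by simp
  also have "\<dots> = 1 / real k"
    using step by (simp add: by_weight_def divide_simps)
  finally show ?case .
qed

lemma sum_by_weight_mult_index: "(\<Sum>j=1..m. by_weight m j * real j) = (\<Sum>k=1..m. 1 / real k)"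
proof -
  have "(\<Sum>j=1..m. by_weight m j * real j) = (\<Sum>j\<in>{1..m}. \<Sum>k\<in>{k \<in> {1..m}. k \<le> j}. by_weight m j)"
  proof (intro sum.cong)
    fix j assume "j \<in> {1..m}"
    then have "{k \<in> {1..m}. k \<le> j} = {1..j}" by auto
    then show "by_weight m j * real j = (\<Sum>k\<in>{k \<in> {1..m}. k \<le> j}. by_weight m j)" by simp
  qed simp
  also have "\<dots> = (\<Sum>k\<in>{1..m}. \<Sum>j\<in>{j \<in> {1..m}. k \<le> j}. by_weight m j)"
    by (rule sum.swap_restrict) auto
  also have "\<dots> = (\<Sum>k=1..m. 1 / real k)"
  proof (intro sum.cong)
    fix k assume "k \<in> {1..m}"
    then have "{j \<in> {1..m}. k \<le> j} = {k..m}" by auto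
    then show "(\<Sum>j\<in>{j \<in> {1..m}. k \<le> j}. by_weight m j) = 1 / real k"
      using \<open>k \<in> {1..m}\<close> by (simp add: sum_by_weight_from)
  qed simp
  finally show ?thesis .
qed

lemma divide_le_sum_by_weight:
  fixes g :: "nat \<Rightarrow> real"
  assumes "1 \<le> k" "k \<le> m"
    and mono: "\<And>j. k \<le> j \<Longrightarrow> j \<le> m \<Longrightarrow> g k \<le> g j"
    and nonneg: "\<And>j. 1 \<le> j \<Longrightarrow> j \<le> m \<Longrightarrow> 0 \<le> g j"
  shows "g k / real k \<le> (\<Sum>j=1..m. by_weight m j * g j)"
proof -
  have "g k / real k = (\<Sum>j=k..m. by_weight m j * g k)"
    using assms(1,2) by (simp add: sum_distrib_right[symmetric] sum_by_weight_from)
  also have "\<dots> \<le> (\<Sum>j=k..m. by_weight m j * g j)"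
    by (intro sum_mono mult_left_mono mono by_weight_nonneg) auto
  also have "\<dots> \<le> (\<Sum>j=1..m. by_weight m j * g j)"
    using assms(1) by (intro sum_mono2) (auto intro!: mult_nonneg_nonneg by_weight_nonneg nonneg)
  finally show ?thesis .
qed

lemma sum_divide_card_le_by_weight:
  fixes g :: "nat \<Rightarrow> nat \<Rightarrow> real"
  assumes S: "S \<subseteq> {1..m}"
    and mono: "\<And>i j j'. i \<in> {1..m} \<Longrightarrow> j \<le> j' \<Longrightarrow> j' \<le> m \<Longrightarrow> g i j \<le> g i j'"
    and nonneg: "\<And>i j. i \<in> {1..m} \<Longrightarrow> 0 \<le> g i j"
  shows "(\<Sum>i\<in>S. g i (card S)) / max 1 (real (card S))
           \<le> (\<Sum>i=1..m. \<Sum>j=1..m. by_weight m j * g i j)"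
proof (cases "S = {}")
  case True
  then show ?thesis
    by (auto intro!: sum_nonneg mult_nonneg_nonneg by_weight_nonneg nonneg)
next
  case False
  have "finite S" using S finite_subset by blast
  then have k: "1 \<le> card S" "card S \<le> m"
    using False S card_mono[OF _ S] by (auto simp: Suc_le_eq card_gt_0_iff)
  have "(\<Sum>i\<in>S. g i (card S)) / max 1 (real (card S)) = (\<Sum>i\<in>S. g i (card S) / real (card S))"
    using k by (simp add: sum_divide_distrib)
  also have "\<dots> \<le> (\<Sum>i=1..m. g i (card S) / real (card S))"
    using S by (intro sum_mono2) (auto intro!: divide_nonneg_nonneg nonneg)
  also have "\<dots> \<le> (\<Sum>i=1..m. \<Sum>j=1..m. by_weight m j * g i j)"
    using k by (intro sum_mono divide_le_sum_by_weight mono nonneg) auto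
  finally show ?thesis .
qed

lemma real_le_fm: "real m \<le> fm m"
proof (cases "m = 0")
  case False
  have "1 \<le> (\<Sum>j=1..m. 1 / real j)"
    using sum_mono2[of "{1..m}" "{1}" "\<lambda>j. 1 / real j"] False by simp
  then show ?thesis
    unfolding fm_def using mult_left_mono[of 1 _ "real m"] by simp
qed (simp add: fm_def)

lemma level_in_unit_interval:
  assumes "q \<in> {0..1}" "j \<le> m"
  shows "q * real j / fm m \<in> {0..1}"
proof -
  have "q * real j \<le> 1 * fm m"
    using assms real_le_fm[of m] by (intro mult_mono) auto
  moreover have "0 \<le> fm m"
    using real_le_fm[of m] by linarith
  ultimately show ?thesis
    using assms by (auto simp: divide_simps)
qed

lemma level_mono:
  assumes "0 \<le> q" "j \<le> j'"
  shows "q * real j / fm m \<le> q * real j' / fm m"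
  using assms real_le_fm[of m] by (intro divide_right_mono mult_left_mono) auto

lemma integral_sum_by_weight_le:
  fixes X :: "nat \<Rightarrow> nat \<Rightarrow> 'a \<Rightarrow> real"
  assumes integrable: "\<And>i j. i \<in> {1..m} \<Longrightarrow> j \<in> {1..m} \<Longrightarrow> integrable M (X i j)"
    and risk: "\<And>i j. i \<in> {1..m} \<Longrightarrow> j \<in> {1..m} \<Longrightarrow> (\<integral>x. X i j x \<partial>M) \<le> q * real j / fm m"
    and "0 \<le> q"
  shows "integrable M (\<lambda>x. \<Sum>i=1..m. \<Sum>j=1..m. by_weight m j * X i j x)"
    and "(\<integral>x. (\<Sum>i=1..m. \<Sum>j=1..m. by_weight m j * X i j x) \<partial>M) \<le> q"
proof -
  have row_integrable: "integrable M (\<lambda>x. \<Sum>j=1..m. by_weight m j * X i j x)" if "i \<in> {1..m}" for i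
    using that by (intro Bochner_Integration.integrable_sum integrable_mult_right integrable)
  then show "integrable M (\<lambda>x. \<Sum>i=1..m. \<Sum>j=1..m. by_weight m j * X i j x)"
    by (rule Bochner_Integration.integrable_sum)
  have "(\<integral>x. (\<Sum>i=1..m. \<Sum>j=1..m. by_weight m j * X i j x) \<partial>M)
          = (\<Sum>i=1..m. (\<integral>x. (\<Sum>j=1..m. by_weight m j * X i j x) \<partial>M))"
    using row_integrable by (rule Bochner_Integration.integral_sum)
  also have "\<dots> = (\<Sum>i=1..m. \<Sum>j=1..m. by_weight m j * (\<integral>x. X i j x \<partial>M))"
    using integrable by (intro sum.cong refl, subst Bochner_Integration.integral_sum) auto
  also have "\<dots> \<le> (\<Sum>i=1..m. \<Sum>j=1..m. by_weight m j * (q * real j / fm m))"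
    by (intro sum_mono mult_left_mono risk by_weight_nonneg) auto
  also have "\<dots> = real m * (\<Sum>j=1..m. by_weight m j * real j) * q / fm m"
    by (simp add: sum_distrib_left sum_distrib_right sum_divide_distrib mult_ac)
  also have "\<dots> = real m * (\<Sum>k=1..m. 1 / real k) * q / fm m"
    by (simp only: sum_by_weight_mult_index)
  also have "\<dots> \<le> q"
    using real_le_fm[of m] \<open>0 \<le> q\<close> by (cases "m = 0") (auto simp: fm_def)
  finally show "(\<integral>x. (\<Sum>i=1..m. \<Sum>j=1..m. by_weight m j * X i j x) \<partial>M) \<le> q" .
qed

theorem theorem3:
  fixes P :: "'t \<Rightarrow> 'x measure" and \<Theta> :: "'t set" and m :: nat
    and L :: "nat \<Rightarrow> 'd \<Rightarrow> 't \<Rightarrow> real"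
    and d :: "nat \<Rightarrow> 'x \<Rightarrow> real \<Rightarrow> 'd"
    and s1 :: "'x \<Rightarrow> nat \<Rightarrow> bool"
  assumes prob: "\<And>\<theta>. \<theta> \<in> \<Theta> \<Longrightarrow> prob_space (P \<theta>)"
    and loss_range: "\<And>i \<delta> \<theta>. i \<in> {1..m} \<Longrightarrow> \<theta> \<in> \<Theta> \<Longrightarrow> L i \<delta> \<theta> \<in> {0..1}"
    and sel_meas: "\<And>i \<theta>. i \<in> {1..m} \<Longrightarrow> \<theta> \<in> \<Theta> \<Longrightarrow>
                      {x \<in> space (P \<theta>). s1 x i} \<in> sets (P \<theta>)"
    and loss_meas: "\<And>i \<theta> q'. i \<in> {1..m} \<Longrightarrow> \<theta> \<in> \<Theta> \<Longrightarrow> q' \<in> {0..1} \<Longrightarrow>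
                      (\<lambda>x. L i (d i x q') \<theta>) \<in> borel_measurable (P \<theta>)"
    and risk_control: "\<And>i \<theta> q'. i \<in> {1..m} \<Longrightarrow> \<theta> \<in> \<Theta> \<Longrightarrow> q' \<in> {0..1} \<Longrightarrow>
                      (\<integral>x. L i (d i x q') \<theta> \<partial>P \<theta>) \<le> q'"
    and mono_loss: "\<And>i \<theta> x. i \<in> {1..m} \<Longrightarrow> \<theta> \<in> \<Theta> \<Longrightarrow>
                      mono_on {0..1} (\<lambda>q'. L i (d i x q') \<theta>)"
    and theta: "\<theta> \<in> \<Theta>"
    and q: "q \<in> {0..1}"
  shows "(\<integral>x. (\<Sum>i\<in>selected m s1 x.
              L i (d i x (q * real (card (selected m s1 x)) / fm m)) \<theta>)
            / max 1 (real (card (selected m s1 x))) \<partial>P \<theta>) \<le> q"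
proof -
  interpret prob_space "P \<theta>" using prob theta .
  define g where "g x i j = L i (d i x (q * real j / fm m)) \<theta>" for x i j
  define G where "G x = (\<Sum>i=1..m. \<Sum>j=1..m. by_weight m j * g x i j)" for x
  have g_nonneg: "0 \<le> g x i j" if "i \<in> {1..m}" for x i j
    using loss_range[OF that theta] by (simp add: g_def)
  have g_mono: "g x i j \<le> g x i j'" if "i \<in> {1..m}" "j \<le> j'" "j' \<le> m" for x i j j'
    unfolding g_def using that q
    by (intro mono_onD[OF mono_loss[OF _ theta]] level_in_unit_interval level_mono) auto
  have g_integrable: "integrable (P \<theta>) (\<lambda>x. g x i j)" if "i \<in> {1..m}" "j \<in> {1..m}" for i j
    using that loss_range theta loss_meas level_in_unit_interval[OF q]
    by (intro integrable_const_bound[where B = 1]) (auto simp: g_def)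
  have G_integrable: "integrable (P \<theta>) G" and G_integral: "(\<integral>x. G x \<partial>P \<theta>) \<le> q"
    unfolding G_def using g_integrable risk_control[OF _ theta level_in_unit_interval[OF q]] q
    by (intro integral_sum_by_weight_le; auto simp: g_def)+
  have dominated: "(\<Sum>i\<in>selected m s1 x. g x i (card (selected m s1 x)))
                   / max 1 (real (card (selected m s1 x))) \<le> G x" for x
    unfolding G_def by (rule sum_divide_card_le_by_weight) (auto simp: selected_def g_nonneg g_mono)
  have G_nonneg: "0 \<le> G x" for x
    unfolding G_def by (intro sum_nonneg mult_nonneg_nonneg by_weight_nonneg g_nonneg) auto
  show ?thesis
    using integral_mono'[OF G_integrable dominated G_nonneg] G_integral by (simp add: g_def)
qed

end
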